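(* Let $V$ be a real vector space of dimension $n+2$ with a nondegenerate symmetric bilinear form $g_{AB}$ (used to raise and lower indices), let $\phi$ be the linear map on the space of algebraic curvature tensors on $V$ sending $R_{ABCD}$ to its trace-free part $\mathring R_{ABCD}$, and let $I^A\in V$ satisfy $\iota:=I_AI^A\neq0$. Let $I^\perp$ be the space of algebraic curvature tensors with $I^AR_{ABCD}=0$. Then $\ker(\phi)\cap I^\perp$ is spanned by $\big(g\wedge(g-\tfrac2\iota I^2)\big)_{ABCD}$, where $(I^2)_{AB}=I_AI_B$.
   Context: An algebraic curvature tensor on $V$ is $R_{ABCD}$ with $R_{ABCD}=-R_{BACD}=-R_{ABDC}$ and $R_{[ABC]D}=0$. For symmetric $Q_{AB},P_{AB}$: $(Q\wedge P)_{ABCD}=Q_{AC}P_{BD}-Q_{BC}P_{AD}+Q_{BD}P_{AC}-Q_{AD}P_{BC}$. The trace-free part of $R_{ABCD}$ is $\mathring R_{ABCD}=R_{ABCD}-(g\wedge P)_{ABCD}$ where $P_{AC}=\frac1n(R_{ABC}{}^B-\mathsf Jg_{AC})$ and $\mathsf J=P_A{}^A=\frac1{2(n+1)}R_{AB}{}^{AB}$. *)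

theory Defs
  imports "HOL-Analysis.Analysis"
begin

text \<open>Tensors on V = R^'i are represented by their components w.r.t. the standard
basis indexed by the finite type 'i (dim V = CARD('i) = n + 2).  A 4-tensor with all
indices down is a function 'i => 'i => 'i => 'i => real.\<close>

type_synonym 'i tensor4 = "'i \<Rightarrow> 'i \<Rightarrow> 'i \<Rightarrow> 'i \<Rightarrow> real"
type_synonym 'i tensor2 = "'i \<Rightarrow> 'i \<Rightarrow> real"

definition alg_curv :: "'i::finite tensor4 \<Rightarrow> bool" where
  "alg_curv R \<longleftrightarrow>
     (\<forall>A B C D. R A B C D = - R B A C D) \<and>
     (\<forall>A B C D. R A B C D = - R A B D C) \<and>
     (\<forall>A B C D. R A B C D + R B C A D + R C A B D = 0)"

definition wedge :: "'i tensor2 \<Rightarrow> 'i tensor2 \<Rightarrow> 'i tensor4" where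
  "wedge Q P = (\<lambda>A B C D. Q A C * P B D - Q B C * P A D + Q B D * P A C - Q A D * P B C)"

definition dimn :: "'i::finite itself \<Rightarrow> nat" where
  "dimn _ = CARD('i) - 2"

definition ginv :: "real^'i^'i \<Rightarrow> 'i::finite tensor2" where
  "ginv g = (\<lambda>A B. matrix_inv g $ A $ B)"

definition ric :: "real^'i^'i \<Rightarrow> 'i::finite tensor4 \<Rightarrow> 'i tensor2" where
  "ric g R = (\<lambda>A C. \<Sum>B\<in>UNIV. \<Sum>D\<in>UNIV. R A B C D * ginv g D B)"

definition Jsc :: "real^'i^'i \<Rightarrow> 'i::finite tensor4 \<Rightarrow> real" where
  "Jsc g R = (1 / (2 * (real (dimn TYPE('i)) + 1))) *
     (\<Sum>A\<in>UNIV. \<Sum>B\<in>UNIV. \<Sum>C\<in>UNIV. \<Sum>D\<in>UNIV. R A B C D * ginv g C A * ginv g D B)"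

definition Psch :: "real^'i^'i \<Rightarrow> 'i::finite tensor4 \<Rightarrow> 'i tensor2" where
  "Psch g R = (\<lambda>A C. (1 / real (dimn TYPE('i))) * (ric g R A C - Jsc g R * g $ A $ C))"

definition trace_free :: "real^'i^'i \<Rightarrow> 'i::finite tensor4 \<Rightarrow> 'i tensor4" where
  "trace_free g R = (\<lambda>A B C D. R A B C D - wedge (\<lambda>X Y. g $ X $ Y) (Psch g R) A B C D)"

definition lower :: "real^'i^'i \<Rightarrow> real^'i \<Rightarrow> 'i::finite \<Rightarrow> real" where
  "lower g I = (\<lambda>A. \<Sum>B\<in>UNIV. g $ A $ B * I $ B)"

end

theory Submission
  imports Defs
begin

(* If \<phi>(R) = 0 then R = g \<wedge> P for the Schouten tensor P of R, which is symmetric by the pair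
   symmetry of R; conversely the Schouten tensor of g \<wedge> Q is Q itself, so g \<wedge> Q lies in the
   kernel. For R = g \<wedge> P, contracting I^A R_ABCD = 0 with g^BC shows that I^A P_AB is a multiple
   of I_B, and a further contraction with I^C forces P to be a multiple of g - (2/\<iota>) I I.
   Conversely I^A (g - (2/\<iota>) I I)_AB = -I_B, which makes g \<wedge> (g - (2/\<iota>) I I) annihilated by I. *)

definition metric_trace :: "real^'i^'i \<Rightarrow> 'i::finite tensor2 \<Rightarrow> real" where
  "metric_trace g Q = (\<Sum>A\<in>UNIV. \<Sum>B\<in>UNIV. Q A B * ginv g B A)"

definition metric_sq :: "real^'i^'i \<Rightarrow> real^'i \<Rightarrow> real" where
  "metric_sq g I = (\<Sum>A\<in>UNIV. lower g I A * I $ A)"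

text \<open>The form (x, y) \<mapsto> g(\<rho> x, y), where \<rho> is the g-reflection in the hyperplane
  orthogonal to I.\<close>
definition reflected_metric :: "real^'i^'i \<Rightarrow> real^'i \<Rightarrow> 'i::finite tensor2" where
  "reflected_metric g I =
     (\<lambda>X Y. g $ X $ Y - 2 / metric_sq g I * lower g I X * lower g I Y)"

lemma alg_curv_pair_sym:
  assumes "alg_curv R"
  shows "R a b c d = R c d a b"
proof -
  have skew1: "\<And>A B C D. R A B C D = - R B A C D"
    and skew2: "\<And>A B C D. R A B C D = - R A B D C"
    and bianchi: "\<And>A B C D. R A B C D + R B C A D + R C A B D = 0"
    using assms unfolding alg_curv_def by blast+
  show ?thesis
    using bianchi[of a d b c] bianchi[of d b c a] bianchi[of b c a d] bianchi[of c a d b]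
      skew2[of a d c b] skew2[of b c d a] skew2[of c a b d] skew2[of d b a c]
      skew1[of b a d c] skew2[of a b d c] skew2[of c d a b] skew1[of c d a b]
    by linarith
qed

lemma wedge_alg_curv:
  assumes "\<And>a b. G a b = G b a" and "\<And>a b. Q a b = Q b a"
  shows "alg_curv (wedge G (Q :: 'i::finite tensor2))"
  using assms unfolding alg_curv_def wedge_def by (auto simp: algebra_simps)

lemma wedge_scale: "(\<lambda>A B C D. c * wedge G Q A B C D) = wedge G (\<lambda>X Y. c * Q X Y)"
  by (simp add: fun_eq_iff wedge_def algebra_simps)

lemma trace_free_eq_0_iff:
  "trace_free g R = (\<lambda>A B C D. 0) \<longleftrightarrow> R = wedge (\<lambda>X Y. g $ X $ Y) (Psch g R)"
  by (auto simp: trace_free_def fun_eq_iff)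

lemma Jsc_eq_metric_trace_ric:
  "Jsc g R = metric_trace g (ric g R) / (2 * (real (dimn TYPE('i)) + 1))"
  for R :: "'i::finite tensor4"
proof -
  have "metric_trace g (ric g R)
      = (\<Sum>A\<in>UNIV. \<Sum>C\<in>UNIV. \<Sum>B\<in>UNIV. \<Sum>D\<in>UNIV. R A B C D * ginv g C A * ginv g D B)"
    by (simp add: metric_trace_def ric_def sum_distrib_left sum_distrib_right mult_ac)
  also have "\<dots> = (\<Sum>A\<in>UNIV. \<Sum>B\<in>UNIV. \<Sum>C\<in>UNIV. \<Sum>D\<in>UNIV. R A B C D * ginv g C A * ginv g D B)"
    by (rule sum.cong[OF refl]) (rule sum.swap)
  finally show ?thesis
    by (simp add: Jsc_def)
qed

lemma symmetric_matrix_entry: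
  assumes "transpose A = A"
  shows "A $ i $ j = A $ j $ i"
proof -
  have "transpose A $ j $ i = A $ i $ j"
    by (simp add: transpose_def)
  with assms show ?thesis
    by simp
qed

locale nondegenerate_metric =
  fixes g :: "real^'i::finite^'i"
  assumes symmetric: "transpose g = g"
    and nondegenerate: "invertible g"
begin

lemma g_sym: "g $ a $ b = g $ b $ a"
  using symmetric by (rule symmetric_matrix_entry)

lemma matrix_inv_g: "g ** matrix_inv g = mat 1 \<and> matrix_inv g ** g = mat 1"
  using nondegenerate unfolding invertible_def matrix_inv_def by (rule someI_ex)

lemma ginv_sym: "ginv g a b = ginv g b a"
proof -
  have "transpose (matrix_inv g) ** g = mat 1"
    using matrix_inv_g symmetric by (metis matrix_transpose_mul transpose_mat)
  then have "transpose (matrix_inv g) = matrix_inv g"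
    by (metis matrix_inv_g matrix_mul_assoc matrix_mul_lid matrix_mul_rid)
  then show ?thesis
    unfolding ginv_def by (rule symmetric_matrix_entry)
qed

lemma g_ginv: "(\<Sum>b\<in>UNIV. g $ a $ b * ginv g b c) = of_bool (a = c)"
  using matrix_inv_g
  by (simp add: ginv_def matrix_matrix_mult_def mat_def vec_eq_iff)

lemma ginv_g: "(\<Sum>b\<in>UNIV. ginv g a b * g $ b $ c) = of_bool (a = c)"
  using matrix_inv_g
  by (simp add: ginv_def matrix_matrix_mult_def mat_def vec_eq_iff)

lemma metric_trace_g: "metric_trace g (\<lambda>X Y. g $ X $ Y) = real CARD('i)"
  by (simp add: metric_trace_def g_ginv)

lemma ginv_lower: "(\<Sum>b\<in>UNIV. ginv g a b * lower g I b) = I $ a"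
proof -
  have "(\<Sum>b\<in>UNIV. ginv g a b * lower g I b) = (\<Sum>c\<in>UNIV. (\<Sum>b\<in>UNIV. ginv g a b * g $ b $ c) * I $ c)"
    unfolding lower_def sum_distrib_left sum_distrib_right mult.assoc by (rule sum.swap)
  then show ?thesis
    by (simp add: ginv_g)
qed

lemma ric_wedge:
  "ric g (wedge (\<lambda>X Y. g $ X $ Y) Q) a c
     = (real CARD('i) - 2) * Q a c + metric_trace g Q * g $ a $ c"
proof -
  have expand: "wedge (\<lambda>X Y. g $ X $ Y) Q a b c d * ginv g d b
      = g $ a $ c * (Q b d * ginv g d b) - Q a d * (ginv g d b * g $ b $ c)
        + Q a c * (g $ b $ d * ginv g d b) - Q b c * (g $ a $ d * ginv g d b)" for b d
    by (simp add: wedge_def algebra_simps)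
  have "(\<Sum>b\<in>UNIV. \<Sum>d\<in>UNIV. Q a d * (ginv g d b * g $ b $ c)) = Q a c"
    by (subst sum.swap) (simp add: sum_distrib_left[symmetric] ginv_g)
  moreover have "(\<Sum>b\<in>UNIV. \<Sum>d\<in>UNIV. Q a c * (g $ b $ d * ginv g d b)) = real CARD('i) * Q a c"
    by (simp add: sum_distrib_left[symmetric] g_ginv)
  moreover have "(\<Sum>b\<in>UNIV. \<Sum>d\<in>UNIV. Q b c * (g $ a $ d * ginv g d b)) = Q a c"
    by (simp add: sum_distrib_left[symmetric] g_ginv)
  ultimately show ?thesis
    unfolding ric_def metric_trace_def expand sum.distrib sum_subtractf sum_distrib_left[symmetric]
    by (simp add: algebra_simps)
qed

lemma Jsc_wedge:
  assumes "CARD('i) \<ge> 2"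
  shows "Jsc g (wedge (\<lambda>X Y. g $ X $ Y) Q) = metric_trace g Q"
proof -
  have "metric_trace g (ric g (wedge (\<lambda>X Y. g $ X $ Y) Q))
      = (real CARD('i) - 2) * metric_trace g Q + metric_trace g Q * metric_trace g (\<lambda>X Y. g $ X $ Y)"
    by (simp add: metric_trace_def ric_wedge distrib_right sum.distrib sum_distrib_left mult.assoc)
  also have "\<dots> = 2 * (real (dimn TYPE('i)) + 1) * metric_trace g Q"
    using assms by (simp add: metric_trace_g dimn_def of_nat_diff algebra_simps)
  finally show ?thesis
    by (simp add: Jsc_eq_metric_trace_ric)
qed

lemma Psch_wedge:
  assumes "CARD('i) \<ge> 3"
  shows "Psch g (wedge (\<lambda>X Y. g $ X $ Y) Q) = Q"
proof -
  have "real (dimn TYPE('i)) = real CARD('i) - 2" "real CARD('i) - 2 \<noteq> 0"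
    using assms by (auto simp: dimn_def of_nat_diff)
  then show ?thesis
    using assms by (simp add: fun_eq_iff Psch_def ric_wedge Jsc_wedge)
qed

lemma trace_free_wedge:
  assumes "CARD('i) \<ge> 3"
  shows "trace_free g (wedge (\<lambda>X Y. g $ X $ Y) Q) = (\<lambda>A B C D. 0)"
  by (simp add: trace_free_eq_0_iff Psch_wedge[OF assms])

lemma ric_sym:
  assumes "alg_curv R"
  shows "ric g R a c = ric g R c a"
proof -
  have pair: "R c b a d * ginv g d b = R a d c b * ginv g b d" for b d
    using alg_curv_pair_sym[OF assms, of c b a d] ginv_sym[of d b] by simp
  have "ric g R c a = (\<Sum>b\<in>UNIV. \<Sum>d\<in>UNIV. R a d c b * ginv g b d)"
    by (simp add: ric_def pair)
  also have "\<dots> = ric g R a c"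
    unfolding ric_def by (rule sum.swap)
  finally show ?thesis ..
qed

lemma Psch_sym:
  assumes "alg_curv R"
  shows "Psch g R a c = Psch g R c a"
  by (simp add: Psch_def ric_sym[OF assms] g_sym[of a c])

lemma sum_mult_g_eq_lower: "(\<Sum>a\<in>UNIV. I $ a * g $ a $ x) = lower g I x"
  unfolding lower_def by (rule sum.cong) (auto simp: g_sym[of x] mult.commute)

lemma sum_mult_wedge_g:
  "(\<Sum>a\<in>UNIV. I $ a * wedge (\<lambda>X Y. g $ X $ Y) P a b c d)
     = lower g I c * P b d - g $ b $ c * (\<Sum>a\<in>UNIV. I $ a * P a d)
       + g $ b $ d * (\<Sum>a\<in>UNIV. I $ a * P a c) - lower g I d * P b c"
proof -
  have "(\<Sum>a\<in>UNIV. I $ a * wedge (\<lambda>X Y. g $ X $ Y) P a b c d)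
     = (\<Sum>a\<in>UNIV. I $ a * g $ a $ c) * P b d - g $ b $ c * (\<Sum>a\<in>UNIV. I $ a * P a d)
       + g $ b $ d * (\<Sum>a\<in>UNIV. I $ a * P a c) - (\<Sum>a\<in>UNIV. I $ a * g $ a $ d) * P b c"
    by (simp add: wedge_def algebra_simps sum.distrib sum_subtractf sum_distrib_left sum_distrib_right)
  then show ?thesis
    by (simp only: sum_mult_g_eq_lower)
qed

lemma wedge_reflected_metric_orth:
  assumes "metric_sq g I \<noteq> 0"
  shows "(\<Sum>a\<in>UNIV. I $ a * wedge (\<lambda>X Y. g $ X $ Y) (reflected_metric g I) a b c d) = 0"
proof -
  have contract: "(\<Sum>a\<in>UNIV. I $ a * reflected_metric g I a x) = - lower g I x" for x
  proof -
    have "(\<Sum>a\<in>UNIV. I $ a * reflected_metric g I a x)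
        = (\<Sum>a\<in>UNIV. I $ a * g $ a $ x) - 2 / metric_sq g I * lower g I x * metric_sq g I"
      by (simp add: reflected_metric_def metric_sq_def algebra_simps sum_subtractf
          sum_distrib_left sum_distrib_right sum_divide_distrib)
    also have "\<dots> = - lower g I x"
      using assms by (simp add: sum_mult_g_eq_lower)
    finally show ?thesis .
  qed
  show ?thesis
    unfolding sum_mult_wedge_g contract using assms
    by (simp add: reflected_metric_def g_sym[of c b] g_sym[of d b] field_simps)
qed

lemma orth_wedge_imp_reflected_metric:
  assumes dim: "CARD('i) \<ge> 3"
    and nonnull: "metric_sq g I \<noteq> 0"
    and P_sym: "\<And>a b. P a b = P b a"
    and orth: "\<And>b c d. (\<Sum>a\<in>UNIV. I $ a * wedge (\<lambda>X Y. g $ X $ Y) P a b c d) = 0"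
  shows "\<exists>k. P = (\<lambda>X Y. k * reflected_metric g I X Y)"
proof -
  define l where "l = lower g I"
  define v where "v d = (\<Sum>a\<in>UNIV. I $ a * P a d)" for d
  define s where "s = (\<Sum>c\<in>UNIV. I $ c * v c)"
  define \<kappa> where "\<kappa> = metric_trace g P / (2 - real CARD('i))"
  have E: "l c * P b d - g $ b $ c * v d + g $ b $ d * v c - l d * P b c = 0" for b c d
    using orth[of b c d] by (simp add: sum_mult_wedge_g l_def v_def)
  \<comment> \<open>Tracing E with g^bc shows that v is proportional to l; contracting E with I^c
    then expresses P through g and l.\<close>
  have v_eq: "v d = \<kappa> * l d" for d
  proof -
    have "(\<Sum>b\<in>UNIV. \<Sum>c\<in>UNIV. ginv g c b * (l c * P b d))
        = (\<Sum>b\<in>UNIV. (\<Sum>c\<in>UNIV. ginv g b c * l c) * P b d)"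
      by (simp add: ginv_sym sum_distrib_right mult.assoc)
    then have t1: "(\<Sum>b\<in>UNIV. \<Sum>c\<in>UNIV. ginv g c b * (l c * P b d)) = v d"
      by (simp add: l_def v_def ginv_lower)
    have t2: "(\<Sum>b\<in>UNIV. \<Sum>c\<in>UNIV. ginv g c b * (g $ b $ c * v d)) = real CARD('i) * v d"
      using metric_trace_g by (simp add: metric_trace_def mult_ac flip: sum_distrib_left)
    have t3: "(\<Sum>b\<in>UNIV. \<Sum>c\<in>UNIV. ginv g c b * (g $ b $ d * v c)) = v d"
      by (subst sum.swap) (simp add: ginv_g mult.assoc[symmetric] flip: sum_distrib_right)
    have t4: "(\<Sum>b\<in>UNIV. \<Sum>c\<in>UNIV. ginv g c b * (l d * P b c)) = l d * metric_trace g P"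
      by (simp add: metric_trace_def sum_distrib_left mult_ac)
    have "0 = (\<Sum>b\<in>UNIV. \<Sum>c\<in>UNIV. ginv g c b * (l c * P b d - g $ b $ c * v d + g $ b $ d * v c - l d * P b c))"
      by (simp add: E)
    also have "\<dots> = v d - real CARD('i) * v d + v d - l d * metric_trace g P"
      unfolding right_diff_distrib distrib_left sum.distrib sum_subtractf t1 t2 t3 t4 ..
    finally show ?thesis
      using dim by (simp add: \<kappa>_def field_simps)
  qed
  have "metric_sq g I * P b d = 2 * \<kappa> * l b * l d - \<kappa> * metric_sq g I * g $ b $ d" for b d
  proof -
    have u1: "(\<Sum>c\<in>UNIV. I $ c * (l c * P b d)) = metric_sq g I * P b d"
      by (simp add: metric_sq_def l_def sum_distrib_left mult_ac)
    have "(\<Sum>c\<in>UNIV. I $ c * (g $ b $ c * v d)) = (\<Sum>c\<in>UNIV. I $ c * g $ c $ b) * v d"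
      by (simp add: sum_distrib_left g_sym[of b] mult_ac)
    then have u2: "(\<Sum>c\<in>UNIV. I $ c * (g $ b $ c * v d)) = l b * v d"
      by (simp add: sum_mult_g_eq_lower l_def)
    have u3: "(\<Sum>c\<in>UNIV. I $ c * (g $ b $ d * v c)) = g $ b $ d * s"
      by (simp add: s_def sum_distrib_left mult_ac)
    have u4: "(\<Sum>c\<in>UNIV. I $ c * (l d * P b c)) = l d * v b"
      by (simp add: v_def P_sym[of b] sum_distrib_left mult_ac)
    have "0 = (\<Sum>c\<in>UNIV. I $ c * (l c * P b d - g $ b $ c * v d + g $ b $ d * v c - l d * P b c))"
      by (simp add: E)
    also have "\<dots> = metric_sq g I * P b d - l b * v d + g $ b $ d * s - l d * v b"
      unfolding right_diff_distrib distrib_left sum.distrib sum_subtractf u1 u2 u3 u4 ..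
    finally show ?thesis
      by (simp add: v_eq s_def sum_distrib_left sum_distrib_right metric_sq_def l_def mult_ac
          algebra_simps)
  qed
  then have "P = (\<lambda>X Y. - \<kappa> * reflected_metric g I X Y)"
    using nonnull by (simp add: fun_eq_iff reflected_metric_def l_def field_simps)
  then show ?thesis ..
qed

lemma reflected_metric_sym: "reflected_metric g I a b = reflected_metric g I b a"
  by (simp add: reflected_metric_def g_sym[of a b])

lemma kernel_orth_iff_wedge_reflected_metric:
  assumes dim: "CARD('i) \<ge> 3"
    and nonnull: "metric_sq g I \<noteq> 0"
  shows "alg_curv R \<and> trace_free g R = (\<lambda>A B C D. 0) \<and> (\<forall>B C D. (\<Sum>A\<in>UNIV. I $ A * R A B C D) = 0)
    \<longleftrightarrow> (\<exists>c. R = wedge (\<lambda>X Y. g $ X $ Y) (\<lambda>X Y. c * reflected_metric g I X Y))"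
proof
  assume "alg_curv R \<and> trace_free g R = (\<lambda>A B C D. 0) \<and> (\<forall>B C D. (\<Sum>A\<in>UNIV. I $ A * R A B C D) = 0)"
  then have curv: "alg_curv R" and "trace_free g R = (\<lambda>A B C D. 0)"
    and orth: "\<And>B C D. (\<Sum>A\<in>UNIV. I $ A * R A B C D) = 0"
    by auto
  then have R: "R = wedge (\<lambda>X Y. g $ X $ Y) (Psch g R)"
    by (simp only: trace_free_eq_0_iff)
  have "(\<Sum>A\<in>UNIV. I $ A * wedge (\<lambda>X Y. g $ X $ Y) (Psch g R) A B C D) = 0" for B C D
    using orth by (simp only: R[symmetric])
  then obtain k where "Psch g R = (\<lambda>X Y. k * reflected_metric g I X Y)"
    using orth_wedge_imp_reflected_metric[OF dim nonnull, of "Psch g R"] Psch_sym[OF curv] by blast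
  with R show "\<exists>c. R = wedge (\<lambda>X Y. g $ X $ Y) (\<lambda>X Y. c * reflected_metric g I X Y)"
    by auto
next
  assume "\<exists>c. R = wedge (\<lambda>X Y. g $ X $ Y) (\<lambda>X Y. c * reflected_metric g I X Y)"
  then obtain c where R: "R = wedge (\<lambda>X Y. g $ X $ Y) (\<lambda>X Y. c * reflected_metric g I X Y)"
    by blast
  have "alg_curv R"
    unfolding R by (rule wedge_alg_curv) (simp_all add: g_sym reflected_metric_sym)
  moreover have "trace_free g R = (\<lambda>A B C D. 0)"
    unfolding R by (rule trace_free_wedge[OF dim])
  moreover have "(\<Sum>A\<in>UNIV. I $ A * R A B C D)
      = c * (\<Sum>A\<in>UNIV. I $ A * wedge (\<lambda>X Y. g $ X $ Y) (reflected_metric g I) A B C D)" for B C D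
    unfolding R wedge_scale[symmetric] sum_distrib_left by (simp add: mult.left_commute)
  ultimately show "alg_curv R \<and> trace_free g R = (\<lambda>A B C D. 0) \<and> (\<forall>B C D. (\<Sum>A\<in>UNIV. I $ A * R A B C D) = 0)"
    by (simp add: wedge_reflected_metric_orth[OF nonnull])
qed

end

theorem lemma4p24:
  fixes g :: "real^'i::finite^'i" and I :: "real^'i"
  assumes dim: "CARD('i) \<ge> 3"
    and sym: "transpose g = g"
    and nondeg: "invertible g"
    and iota: "(\<Sum>A\<in>UNIV. lower g I A * I $ A) \<noteq> 0"
  shows "{R. alg_curv R \<and> trace_free g R = (\<lambda>A B C D. 0)
            \<and> (\<forall>B C D. (\<Sum>A\<in>UNIV. I $ A * R A B C D) = 0)}
         = {(\<lambda>A B C D. c * wedge (\<lambda>X Y. g $ X $ Y)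
               (\<lambda>X Y. g $ X $ Y - 2 / (\<Sum>A\<in>UNIV. lower g I A * I $ A) * lower g I X * lower g I Y)
               A B C D) | c. True}"
proof -
  interpret nondegenerate_metric g
    using sym nondeg by unfold_locales
  have nonnull: "metric_sq g I \<noteq> 0"
    using iota by (simp add: metric_sq_def)
  show ?thesis
    unfolding reflected_metric_def[of g I, unfolded metric_sq_def, symmetric] wedge_scale
      kernel_orth_iff_wedge_reflected_metric[OF dim nonnull]
    by blast
qed

end
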